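(* Let $\mathscr{A},\mathscr{B}$ be real Banach spaces and let $p,p'\in(1,+\infty)$ with $1/p+1/p'=1$. Suppose that $(\lambda,\mu)\in(\mathscr{A}^*\oplus_{p'}\mathscr{B}^* )\setminus\{(0,0)\}$ is norming for $(\mathbf{a},\mathbf{b})\in(\mathscr{A}\oplus_p\mathscr{B})\setminus\{(0,0)\}$. Then: 1. If $\mathbf{b}=0$, then $\mu=0$ and $\lambda$ is norming for $\mathbf{a}$. 2. If $\mathbf{a}=0$, then $\lambda=0$ and $\mu$ is norming for $\mathbf{b}$. 3. If $\mathbf{a}\neq0$ and $\mathbf{b}\neq0$, then $\lambda\neq0$, $\mu\neq0$, $\big(1+\|\mathbf{b}\|_{\mathscr{B}}^p/\|\mathbf{a}\|_{\mathscr{A}}^p\big)^{1/p'}\lambda$ is norming for $\mathbf{a}$, and $\big(1+\|\mathbf{a}\|_{\mathscr{A}}^p/\|\mathbf{b}\|_{\mathscr{B}}^p\big)^{1/p'}\mu$ is norming for $\mathbf{b}$.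
   Context: For Banach spaces $\mathscr{A},\mathscr{B}$ and $q\in[1,\infty)$, $\mathscr{A}\oplus_q\mathscr{B}$ is the Cartesian product with componentwise operations and norm $\|(\mathbf{a},\mathbf{b})\|=(\|\mathbf{a}\|_{\mathscr{A}}^q+\|\mathbf{b}\|_{\mathscr{B}}^q)^{1/q}$. The dual of $\mathscr{A}\oplus_p\mathscr{B}$ is identified with $\mathscr{A}^*\oplus_{p'}\mathscr{B}^*$ via the pairing $\langle(\mathbf{a},\mathbf{b}),(\lambda,\mu)\rangle=\lambda(\mathbf{a})+\mu(\mathbf{b})$. A functional $\phi$ in the dual of a Banach space $\mathscr{C}$ is norming for a nonzero $\mathbf{c}\in\mathscr{C}$ if $\|\phi\|=1$ and $\phi(\mathbf{c})=\|\mathbf{c}\|_{\mathscr{C}}$. *)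

theory Defs
  imports "HOL-Analysis.Analysis"
begin

text \<open>The q-norm on a pair of norms: the norm of (x,y) in X (+)_q Y is
  lp2_norm q (norm x) (norm y).\<close>
definition lp2_norm :: "real \<Rightarrow> real \<Rightarrow> real \<Rightarrow> real" where
  "lp2_norm q s t = (s powr q + t powr q) powr (1 / q)"

definition norming :: "('c::real_normed_vector \<Rightarrow>\<^sub>L real) \<Rightarrow> 'c \<Rightarrow> bool" where
  "norming \<phi> c \<longleftrightarrow> c \<noteq> 0 \<and> norm \<phi> = 1 \<and> blinfun_apply \<phi> c = norm c"

text \<open>(lam,mu) in A^* (+)_{p'} B^* (the dual of A (+)_p B, via the pairing
  lam(a)+mu(b)) is norming for a nonzero (a,b) in A (+)_p B.\<close>
definition norming_sum ::
  "real \<Rightarrow> real \<Rightarrow> ('a::real_normed_vector \<Rightarrow>\<^sub>L real) \<Rightarrow> ('b::real_normed_vector \<Rightarrow>\<^sub>L real)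
     \<Rightarrow> 'a \<Rightarrow> 'b \<Rightarrow> bool" where
  "norming_sum p p' lam mu a b \<longleftrightarrow>
     (a, b) \<noteq> (0, 0) \<and> lp2_norm p' (norm lam) (norm mu) = 1 \<and>
     blinfun_apply lam a + blinfun_apply mu b = lp2_norm p (norm a) (norm b)"

end

(*
  Both steps of  lam a + mu b <= ||lam|| ||a|| + ||mu|| ||b|| <= lp2_norm p ||a|| ||b||
  are equalities for a norming pair, the second being Hoelder's inequality for two
  terms with the dual side normalised by lp2_norm p' ||lam|| ||mu|| = 1. Equality in
  Hoelder forces equality in Young's inequality termwise, and the strict weighted
  AM-GM inequality then gives ||lam||^p' = ||a||^p / (||a||^p + ||b||^p), and likewise
  for mu. Since also lam a = ||lam|| ||a||, the functional lam / ||lam||, which is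
  (1 + ||b||^p / ||a||^p)^(1/p') lam, is norming for a whenever a is nonzero.
*)

theory Submission
  imports Defs
begin

lemma Youngs_inequality_0_less:
  fixes \<alpha> \<beta> a b :: real
  assumes "0 < \<alpha>" "0 < \<beta>" "\<alpha> + \<beta> = 1" "0 < a" "0 < b" "a \<noteq> b"
  shows "a powr \<alpha> * b powr \<beta> < \<alpha> * a + \<beta> * b"
proof -
  define M where "M = \<alpha> * a + \<beta> * b"
  have "0 < M"
    unfolding M_def using assms by (intro add_pos_pos mult_pos_pos)
  have "\<alpha> = 1 - \<beta>"
    using assms(3) by simp
  then have "M - a = \<beta> * (b - a)"
    unfolding M_def by (simp add: algebra_simps del: eq_diff_eq)
  then have "a \<noteq> M"
    using assms by auto
  \<comment> \<open>ln lies below its tangent line at M, strictly so at a \<noteq> M\<close>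
  have "\<alpha> * (ln a - ln M) + \<beta> * (ln b - ln M) < \<alpha> * ((a - M) / M) + \<beta> * ((b - M) / M)"
    using \<open>0 < M\<close> \<open>a \<noteq> M\<close> assms
    by (intro add_less_le_mono mult_strict_left_mono mult_left_mono ln_diff_less ln_diff_le) auto
  also have "\<dots> = (\<alpha> * a + \<beta> * b - (\<alpha> + \<beta>) * M) / M"
    by (simp add: diff_divide_distrib add_divide_distrib algebra_simps)
  also have "\<dots> = 0"
    using assms(3) by (simp add: M_def)
  finally have "\<alpha> * ln a + \<beta> * ln b < (\<alpha> + \<beta>) * ln M"
    by (simp add: algebra_simps)
  then have "\<alpha> * ln a + \<beta> * ln b < ln M"
    using assms(3) by simp
  then have "exp (\<alpha> * ln a + \<beta> * ln b) < M"
    using \<open>0 < M\<close> by (metis exp_less_mono exp_ln)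
  moreover have "a powr \<alpha> * b powr \<beta> = exp (\<alpha> * ln a + \<beta> * ln b)"
    using assms by (simp add: powr_def exp_add)
  ultimately show ?thesis
    by (simp add: M_def)
qed

lemma Youngs_inequality_eqD:
  fixes p q a b :: real
  assumes "p > 1" "q > 1" "1/p + 1/q = 1" "0 \<le> a" "0 \<le> b"
    and eq: "a * b = a powr p / p + b powr q / q"
  shows "a powr p = b powr q"
proof (rule ccontr)
  assume ne: "a powr p \<noteq> b powr q"
  then have "a > 0" "b > 0"
    using assms by (auto simp: order_le_less)
  then have "(a powr p) powr (1/p) * (b powr q) powr (1/q) < (1/p) * a powr p + (1/q) * b powr q"
    using assms ne by (intro Youngs_inequality_0_less) auto
  then show False
    using assms \<open>a > 0\<close> \<open>b > 0\<close> by (simp add: powr_powr)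
qed

lemma Holder_pair_normalized:
  fixes p q l m u v :: real
  assumes "p > 1" "q > 1" "1/p + 1/q = 1" "0 \<le> l" "0 \<le> m" "0 \<le> u" "0 \<le> v"
    and lm: "l powr q + m powr q = 1" and uv: "u powr p + v powr p = 1"
  shows "l * u + m * v \<le> 1"
    and "l * u + m * v = 1 \<Longrightarrow> l powr q = u powr p \<and> m powr q = v powr p"
proof -
  have Young_l: "l * u \<le> l powr q / q + u powr p / p"
    and Young_m: "m * v \<le> m powr q / q + v powr p / p"
    using Youngs_inequality[of q p] assms by (simp_all add: add.commute)
  have "(l powr q / q + u powr p / p) + (m powr q / q + v powr p / p)
      = (l powr q + m powr q) / q + (u powr p + v powr p) / p"
    by (simp add: add_divide_distrib)
  then have sum: "(l powr q / q + u powr p / p) + (m powr q / q + v powr p / p) = 1"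
    using lm uv assms(3) by simp
  show "l * u + m * v \<le> 1"
    using Young_l Young_m sum by linarith
  assume "l * u + m * v = 1"
  then have "l * u = l powr q / q + u powr p / p" "m * v = m powr q / q + v powr p / p"
    using Young_l Young_m sum by linarith+
  then show "l powr q = u powr p \<and> m powr q = v powr p"
    using Youngs_inequality_eqD[of q p] assms by (simp add: add.commute)
qed

lemma lp2_norm_powr:
  assumes "p > 0"
  shows "lp2_norm p s t powr p = s powr p + t powr p"
  using assms by (simp add: lp2_norm_def powr_powr)

lemma lp2_norm_pos:
  assumes "s \<noteq> 0 \<or> t \<noteq> 0"
  shows "0 < lp2_norm p s t"
proof -
  have "0 < s powr p + t powr p"
    using assms by (metis add_nonneg_pos add_pos_nonneg powr_ge_zero powr_gt_zero)
  then show ?thesis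
    by (simp add: lp2_norm_def)
qed

lemma lp2_norm_eq_1_iff:
  assumes "q \<noteq> 0"
  shows "lp2_norm q s t = 1 \<longleftrightarrow> s powr q + t powr q = 1"
proof -
  have "(lp2_norm q s t) powr q = s powr q + t powr q"
    using assms by (simp add: lp2_norm_def powr_powr)
  then show ?thesis
    by (auto simp: lp2_norm_def)
qed

lemma lp2_norm_normalize:
  assumes "p > 0" "s \<noteq> 0 \<or> t \<noteq> 0"
  shows "(s / lp2_norm p s t) powr p + (t / lp2_norm p s t) powr p = 1"
proof -
  have "0 < lp2_norm p s t"
    using assms(2) by (rule lp2_norm_pos)
  moreover have "lp2_norm p s t powr p = s powr p + t powr p"
    using assms(1) by (rule lp2_norm_powr)
  ultimately have "0 < s powr p + t powr p"
    by (metis powr_gt_zero less_irrefl)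
  with \<open>lp2_norm p s t powr p = _\<close> show ?thesis
    by (simp add: powr_divide add_divide_distrib[symmetric])
qed

lemma lp2_norm_Holder:
  fixes p q s t x y :: real
  assumes "p > 1" "q > 1" "1/p + 1/q = 1" "0 \<le> s" "0 \<le> t" "0 \<le> x" "0 \<le> y"
    and "lp2_norm q x y = 1"
  shows "x * s + y * t \<le> lp2_norm p s t"
proof (cases "s = 0 \<and> t = 0")
  case True
  then show ?thesis
    by (simp add: lp2_norm_def)
next
  case False
  let ?N = "lp2_norm p s t"
  have "0 < ?N"
    using False by (simp add: lp2_norm_pos)
  moreover have "x * (s / ?N) + y * (t / ?N) \<le> 1"
    using assms False \<open>0 < ?N\<close>
    by (intro Holder_pair_normalized(1)[of p q]) (simp_all add: lp2_norm_eq_1_iff lp2_norm_normalize)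
  ultimately show ?thesis
    by (simp add: add_divide_distrib[symmetric] divide_le_eq)
qed

lemma lp2_norm_Holder_eqD:
  fixes p q s t x y :: real
  assumes "p > 1" "q > 1" "1/p + 1/q = 1" "0 \<le> s" "0 \<le> t" "0 \<le> x" "0 \<le> y"
    and "lp2_norm q x y = 1" and "s \<noteq> 0 \<or> t \<noteq> 0"
    and eq: "x * s + y * t = lp2_norm p s t"
  shows "x powr q = s powr p / (s powr p + t powr p)"
    and "y powr q = t powr p / (s powr p + t powr p)"
proof -
  let ?N = "lp2_norm p s t"
  have "0 < ?N"
    using assms by (simp add: lp2_norm_pos)
  then have "x * (s / ?N) + y * (t / ?N) = 1"
    using eq by (simp add: add_divide_distrib[symmetric])
  then have "x powr q = (s / ?N) powr p \<and> y powr q = (t / ?N) powr p"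
    using assms \<open>0 < ?N\<close>
    by (intro Holder_pair_normalized(2)[of p q]) (simp_all add: lp2_norm_eq_1_iff lp2_norm_normalize)
  moreover have "?N powr p = s powr p + t powr p"
    using assms by (simp add: lp2_norm_powr)
  ultimately show "x powr q = s powr p / (s powr p + t powr p)"
    and "y powr q = t powr p / (s powr p + t powr p)"
    by (simp_all add: powr_divide)
qed

lemma norming_rescaled:
  fixes \<phi> :: "'a::real_normed_vector \<Rightarrow>\<^sub>L real"
  assumes "q \<noteq> 0" "0 < S" "c \<noteq> 0"
    and norm_powr: "norm \<phi> powr q = norm c powr p / S"
    and attained: "\<phi> c = norm \<phi> * norm c"
  shows "norming ((S / norm c powr p) powr (1/q) *\<^sub>R \<phi>) c"
proof -
  have "norm \<phi> = (norm \<phi> powr q) powr (1/q)"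
    using assms(1) by (simp add: powr_powr)
  then have "norm \<phi> = (norm c powr p / S) powr (1/q)"
    by (simp only: norm_powr)
  then have "(S / norm c powr p) powr (1/q) = inverse (norm \<phi>)"
    by (simp flip: inverse_powr)
  moreover have "0 < norm \<phi> powr q"
    unfolding norm_powr using assms(2,3) by simp
  then have "\<phi> \<noteq> 0"
    by auto
  ultimately show ?thesis
    using assms(3) attained by (simp add: norming_def scaleR_blinfun.rep_eq)
qed

lemma norming_sum_Holder_equality:
  fixes lam :: "'a::real_normed_vector \<Rightarrow>\<^sub>L real" and mu :: "'b::real_normed_vector \<Rightarrow>\<^sub>L real"
  assumes "p > 1" "q > 1" "1/p + 1/q = 1" "norming_sum p q lam mu a b"
  shows "lam a = norm lam * norm a" "mu b = norm mu * norm b"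
    and "norm lam powr q = norm a powr p / (norm a powr p + norm b powr p)"
    and "norm mu powr q = norm b powr p / (norm a powr p + norm b powr p)"
proof -
  have dual: "lp2_norm q (norm lam) (norm mu) = 1"
    and pairing: "lam a + mu b = lp2_norm p (norm a) (norm b)"
    and "norm a \<noteq> 0 \<or> norm b \<noteq> 0"
    using assms(4) by (auto simp: norming_sum_def)
  have "lam a \<le> norm lam * norm a" "mu b \<le> norm mu * norm b"
    using norm_blinfun[of lam a] norm_blinfun[of mu b] by simp_all
  moreover have "norm lam * norm a + norm mu * norm b \<le> lp2_norm p (norm a) (norm b)"
    using assms(1-3) dual by (simp add: lp2_norm_Holder)
  ultimately have "lam a = norm lam * norm a" "mu b = norm mu * norm b"
    and Holder_eq: "norm lam * norm a + norm mu * norm b = lp2_norm p (norm a) (norm b)"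
    using pairing by linarith+
  then show "lam a = norm lam * norm a" "mu b = norm mu * norm b"
    by simp_all
  show "norm lam powr q = norm a powr p / (norm a powr p + norm b powr p)"
    and "norm mu powr q = norm b powr p / (norm a powr p + norm b powr p)"
    using lp2_norm_Holder_eqD[OF assms(1-3) _ _ _ _ dual] Holder_eq \<open>norm a \<noteq> 0 \<or> norm b \<noteq> 0\<close>
    by simp_all
qed

theorem proposition3p1:
  fixes p p' :: real
    and lam :: "'a::banach \<Rightarrow>\<^sub>L real" and mu :: "'b::banach \<Rightarrow>\<^sub>L real"
    and a :: 'a and b :: 'b
  assumes "p > 1" and "p' > 1" and "1 / p + 1 / p' = 1"
    and "(lam, mu) \<noteq> (0, 0)"
    and "(a, b) \<noteq> (0, 0)"
    and "norming_sum p p' lam mu a b"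
  shows "(b = 0 \<longrightarrow> mu = 0 \<and> norming lam a)
       \<and> (a = 0 \<longrightarrow> lam = 0 \<and> norming mu b)
       \<and> (a \<noteq> 0 \<and> b \<noteq> 0 \<longrightarrow>
            lam \<noteq> 0 \<and> mu \<noteq> 0
          \<and> norming ((1 + norm b powr p / norm a powr p) powr (1 / p') *\<^sub>R lam) a
          \<and> norming ((1 + norm a powr p / norm b powr p) powr (1 / p') *\<^sub>R mu) b)"
proof -
  \<comment> \<open>The hypothesis (lam, mu) \<noteq> (0, 0) is implied by norming_sum and not needed.\<close>
  let ?S = "norm a powr p + norm b powr p"
  note Holder_eq = norming_sum_Holder_equality[OF assms(1-3,6)]
  have "0 < ?S"
    using assms(5)
    by (metis add_nonneg_pos add_pos_nonneg norm_eq_zero powr_ge_zero powr_gt_zero)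
  have "a \<noteq> 0 \<Longrightarrow> norming ((1 + norm b powr p / norm a powr p) powr (1/p') *\<^sub>R lam) a"
    using norming_rescaled[OF _ \<open>0 < ?S\<close> _ Holder_eq(3,1)] assms(2)
    by (simp add: field_simps)
  moreover have "b \<noteq> 0 \<Longrightarrow> norming ((1 + norm a powr p / norm b powr p) powr (1/p') *\<^sub>R mu) b"
    using norming_rescaled[OF _ \<open>0 < ?S\<close> _ Holder_eq(4,2)] assms(2)
    by (simp add: field_simps)
  moreover have "a = 0 \<Longrightarrow> lam = 0" "b = 0 \<Longrightarrow> mu = 0"
    using Holder_eq(3,4) by simp_all
  ultimately show ?thesis
    using assms(5) by (auto simp: norming_def)
qed

end
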